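(* Let $\mathcal{X}=\{\boldsymbol{x}_j\}_{j=1}^{N}$ have ground-truth partition $\mathcal{S}^*=\{\mathcal{S}_k^*\}_{k=1}^K$ with $K\ge 2$, let $\omega>0$, and let $\mathcal{Z}^*=\{\boldsymbol{z}_j^*\}_{j=1}^N\subset\mathbb{R}^D\setminus\{\mathbf 0\}$ satisfy the conflict-free condition: $\theta_{\boldsymbol{z}_j^*,\boldsymbol{z}_{j'}^*}=0$ whenever $\boldsymbol{x}_j,\boldsymbol{x}_{j'}$ lie in the same cluster, and $\theta_{\boldsymbol{z}_j^*,\boldsymbol{z}_{j'}^*}\ge\pi/\omega$ whenever they lie in different clusters. Then every constraint derived from $\mathcal{S}^*$ uniquely determines its angle (in the sense defined in the context) if and only if (i) $\mathcal{Z}^*$ is equidistant among clusters, i.e. there is $\theta^*>0$ with $\theta_{\boldsymbol{z}_j^*,\boldsymbol{z}_{j'}^*}=\theta^*$ for all $\boldsymbol{x}_j\in\mathcal{S}_k^*$, $\boldsymbol{x}_{j'}\in\mathcal{S}_{k'}^*$ with $k\ne k'$; and (ii) $\omega=\omega^*:=\pi/\theta^*$.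
   Context: For nonzero vectors $\boldsymbol{u},\boldsymbol{v}$, $\theta_{\boldsymbol{u},\boldsymbol{v}}\in[0,\pi]$ denotes the angle between them. A constraint $(j,j',y)$ derived from $\mathcal{S}^*$ has $y=1$ if $\boldsymbol{x}_j,\boldsymbol{x}_{j'}$ are in the same cluster and $y=0$ otherwise. A zero-loss positive constraint forces angle $0$, while a zero-loss negative constraint only forces angle $\ge\pi/\omega$. "Every constraint uniquely determines its angle" means: for every positive constraint $(j,j',1)$ the angle $\theta_{\boldsymbol{z}_j^*,\boldsymbol{z}_{j'}^*}$ equals $0$, and for every negative constraint $(j,j',0)$ the angle $\theta_{\boldsymbol{z}_j^*,\boldsymbol{z}_{j'}^*}$ equals exactly the enforced separation $\pi/\omega$ (rather than being merely bounded below by it). *)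

theory Defs
  imports "HOL-Analysis.Analysis"
begin

definition vec_angle :: "'a::real_inner \<Rightarrow> 'a \<Rightarrow> real" where
  "vec_angle u v = arccos ((u \<bullet> v) / (norm u * norm v))"

end

theory Submission
  imports Defs
begin

theorem proposition2:
  fixes N K :: nat
    and cl :: "nat \<Rightarrow> nat"
    and z :: "nat \<Rightarrow> real ^ 'D"
    and \<omega> :: real
  assumes K2: "K \<ge> 2"
    and cl_range: "cl ` {..<N} = {..<K}"
    and omega_pos: "\<omega> > 0"
    and z_nonzero: "\<forall>j<N. z j \<noteq> 0"
    and conflict_free_pos: "\<forall>j<N. \<forall>j'<N. cl j = cl j' \<longrightarrow> vec_angle (z j) (z j') = 0"
    and conflict_free_neg: "\<forall>j<N. \<forall>j'<N. cl j \<noteq> cl j' \<longrightarrow> vec_angle (z j) (z j') \<ge> pi / \<omega>"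
  shows "(\<forall>j<N. \<forall>j'<N.
            (cl j = cl j' \<longrightarrow> vec_angle (z j) (z j') = 0) \<and>
            (cl j \<noteq> cl j' \<longrightarrow> vec_angle (z j) (z j') = pi / \<omega>))
         \<longleftrightarrow>
         (\<exists>\<theta>>0. (\<forall>j<N. \<forall>j'<N. cl j \<noteq> cl j' \<longrightarrow> vec_angle (z j) (z j') = \<theta>)
                 \<and> \<omega> = pi / \<theta>)"
proof (rule iffI, goal_cases sharp equidistant)
  case sharp
  moreover have "pi / \<omega> > 0" and "\<omega> = pi / (pi / \<omega>)"
    using omega_pos by simp_all
  ultimately show ?case
    by blast
next
  case equidistant
  then obtain \<theta> where "\<theta> > 0" and "\<omega> = pi / \<theta>"
    and "\<forall>j<N. \<forall>j'<N. cl j \<noteq> cl j' \<longrightarrow> vec_angle (z j) (z j') = \<theta>"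
    by blast
  then show ?case
    using conflict_free_pos by simp
qed

end
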